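(* Let $\alpha_0>0$, $\alpha_1\in\mathbb{R}$, $0<\gamma\notin\mathbb{N}$, $\tilde\alpha_0=\alpha_0/\cos(\frac{\pi}{2}\gamma)$, and $\alpha^*_{pl+}(\omega)=\tilde\alpha_0(-i\omega)^\gamma+\alpha_1(-i\omega)$ for $\omega\in\mathbb{R}$. Let $K(\vec x,t)=\frac{1}{\sqrt{2\pi}}\mathcal{F}^{-1}\{e^{-\alpha^*_{pl+}(\cdot)|\vec x|}\}(t)$. If $\gamma>1$, then $K$ is not causal. If $\gamma\in(0,1)$, then $K$ is causal if and only if $\alpha_1\in[0,\infty)$. *)

theory Defs
  imports "HOL-Analysis.Analysis"
begin

text \<open>Fourier convention: F{f}(w) = integral of f(t) e^{i w t} dt,
  inverse F^{-1}{g}(t) = (1/(2 pi)) integral of g(w) e^{-i w t} dw.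
  Complex powers use the principal branch (Isabelle's complex powr).\<close>

definition alpha_tilde0 :: "real \<Rightarrow> real \<Rightarrow> real" where
  "alpha_tilde0 a0 \<gamma> = a0 / cos (pi / 2 * \<gamma>)"

definition alpha_pl_plus :: "real \<Rightarrow> real \<Rightarrow> real \<Rightarrow> real \<Rightarrow> complex" where
  "alpha_pl_plus a0 a1 \<gamma> \<omega> =
     complex_of_real (alpha_tilde0 a0 \<gamma>) * ((- \<i> * complex_of_real \<omega>) powr complex_of_real \<gamma>)
     + complex_of_real a1 * (- \<i> * complex_of_real \<omega>)"

definition inv_fourier :: "(real \<Rightarrow> complex) \<Rightarrow> real \<Rightarrow> complex" where
  "inv_fourier g t = complex_of_real (1 / (2 * pi)) *
     integral\<^sup>L lborel (\<lambda>\<omega>. g \<omega> * exp (- \<i> * complex_of_real (\<omega> * t)))"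

definition K_pl :: "real \<Rightarrow> real \<Rightarrow> real \<Rightarrow> 'a::euclidean_space \<Rightarrow> real \<Rightarrow> complex" where
  "K_pl a0 a1 \<gamma> x t = complex_of_real (1 / sqrt (2 * pi)) *
     inv_fourier (\<lambda>\<omega>. exp (- alpha_pl_plus a0 a1 \<gamma> \<omega> * complex_of_real (norm x))) t"

text \<open>Causality: K(x,t) = 0 for all t < 0 (at every x \<noteq> 0; at x = 0 the
  kernel is the distribution delta(t)/sqrt(2 pi), which is trivially causal).\<close>
definition causal :: "('a::euclidean_space \<Rightarrow> real \<Rightarrow> complex) \<Rightarrow> bool" where
  "causal K \<longleftrightarrow> (\<forall>x. x \<noteq> 0 \<longrightarrow> (\<forall>t<0. K x t = 0))"

end

theory Submission
  imports Defs "HOL-Probability.Probability" "HOL-Complex_Analysis.Complex_Analysis"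
    "HOL-Real_Asymp.Real_Asymp"
begin

text \<open>Substituting \<open>\<omega> = |x|\<^sup>-\<^sup>1\<^sup>/\<^sup>\<gamma> v\<close> shows that \<open>K(x,t)\<close> is a positive multiple of
  \<open>S(|x|\<^sup>-\<^sup>1\<^sup>/\<^sup>\<gamma> (t - \<alpha>\<^sub>1|x|))\<close>, where \<open>S\<close> is the inverse Fourier transform of
  \<open>G(\<omega>) = exp (-\<alpha>\<^sub>0 (-\<i>\<omega>)\<^sup>\<gamma> / cos (\<pi>\<gamma>/2))\<close>, a stable density. For \<open>x \<noteq> 0\<close>, \<open>t < 0\<close> these
  arguments sweep out \<open>(-\<infinity>,0)\<close> if \<open>\<alpha>\<^sub>1 \<ge> 0\<close> and all of \<open>\<real>\<close> if \<open>\<alpha>\<^sub>1 < 0\<close>, and \<open>S\<close> is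
  not identically zero. For \<open>\<gamma> < 1\<close>, \<open>G(z) e\<^sup>-\<^sup>\<i>\<^sup>z\<^sup>w\<close> is holomorphic in the upper half
  plane and bounded by \<open>exp (-\<alpha>\<^sub>0 |z|\<^sup>\<gamma>)\<close> there when \<open>w < 0\<close>, so shifting the contour
  upwards gives \<open>S(w) = 0\<close> for \<open>w < 0\<close>: the kernel is causal iff \<open>\<alpha>\<^sub>1 \<ge> 0\<close>. For
  \<open>\<gamma> > 1\<close>, \<open>|G(\<omega>)| = exp (-\<alpha>\<^sub>0 |\<omega>|\<^sup>\<gamma>)\<close> decays faster than any exponential, so \<open>S\<close>
  extends to an entire function, which cannot vanish on \<open>(-\<infinity>,0)\<close> without vanishing
  everywhere.\<close>

section \<open>Integrability of stretched exponentials\<close>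

lemma integrable_abs_of_square_decay:
  fixes f :: "real \<Rightarrow> real"
  assumes cont: "continuous_on {0..} f" and decay: "((\<lambda>x. x\<^sup>2 * f x) \<longlongrightarrow> 0) at_top"
  shows "integrable lborel (\<lambda>\<omega>. f \<bar>\<omega>\<bar>)"
proof -
  obtain N where N: "\<And>x. x \<ge> N \<Longrightarrow> \<bar>x\<^sup>2 * f x\<bar> \<le> 1"
    using order_tendstoD(2)[OF tendsto_rabs_zero[OF decay], of 1]
    by (force simp: eventually_at_top_linorder intro: less_imp_le)
  define R where "R = max N 1"
  obtain M where "M \<ge> 0" and M: "\<And>x. x \<in> {0..R} \<Longrightarrow> norm (f x) \<le> M"
    using continuous_on_compact_bound[of "{0..R}" f] continuous_on_subset[OF cont] by auto
  have bound: "\<bar>f \<bar>\<omega>\<bar>\<bar> \<le> (2 + M * (1 + R\<^sup>2)) * inverse (1 + \<omega>\<^sup>2)" for \<omega>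
  proof (cases "\<bar>\<omega>\<bar> \<le> R")
    case True
    then have "\<omega>\<^sup>2 \<le> R\<^sup>2"
      by (metis abs_ge_zero power2_abs power_mono)
    then have "M \<le> M * (1 + R\<^sup>2) * inverse (1 + \<omega>\<^sup>2)"
      using \<open>M \<ge> 0\<close> by (simp add: field_simps add_pos_nonneg mult_left_mono)
    moreover have "0 \<le> 2 * inverse (1 + \<omega>\<^sup>2)"
      by (simp add: add_pos_nonneg)
    moreover have "\<bar>f \<bar>\<omega>\<bar>\<bar> \<le> M"
      using M[of "\<bar>\<omega>\<bar>"] True by simp
    ultimately show ?thesis
      unfolding distrib_right by linarith
  next
    case False
    then have "1 \<le> \<bar>\<omega>\<bar>" and "N \<le> \<bar>\<omega>\<bar>"
      by (auto simp: R_def)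
    then have "1 \<le> \<omega>\<^sup>2" and "\<omega>\<^sup>2 * \<bar>f \<bar>\<omega>\<bar>\<bar> \<le> 1"
      using N[of "\<bar>\<omega>\<bar>"] one_le_power[of "\<bar>\<omega>\<bar>" 2] by (auto simp: abs_mult)
    moreover have "\<bar>f \<bar>\<omega>\<bar>\<bar> \<le> \<omega>\<^sup>2 * \<bar>f \<bar>\<omega>\<bar>\<bar>"
      using \<open>1 \<le> \<omega>\<^sup>2\<close> mult_right_mono[of 1 "\<omega>\<^sup>2" "\<bar>f \<bar>\<omega>\<bar>\<bar>"] by simp
    ultimately have "\<bar>f \<bar>\<omega>\<bar>\<bar> * (1 + \<omega>\<^sup>2) \<le> 2"
      by (simp add: algebra_simps)
    then have "\<bar>f \<bar>\<omega>\<bar>\<bar> \<le> 2 * inverse (1 + \<omega>\<^sup>2)"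
      by (simp add: field_simps add_pos_nonneg)
    moreover have "0 \<le> M * (1 + R\<^sup>2) * inverse (1 + \<omega>\<^sup>2)"
      using \<open>M \<ge> 0\<close> by (simp add: add_pos_nonneg)
    ultimately show ?thesis unfolding distrib_right by linarith
  qed
  have "continuous_on UNIV (\<lambda>\<omega>. f \<bar>\<omega>\<bar>)"
    by (rule continuous_on_compose2[OF cont continuous_on_rabs]) auto
  then have [measurable]: "(\<lambda>\<omega>. f \<bar>\<omega>\<bar>) \<in> borel_measurable lborel"
    by (simp add: borel_measurable_continuous_onI)
  show ?thesis
  proof (rule Bochner_Integration.integrable_bound)
    show "integrable lborel (\<lambda>\<omega>. (2 + M * (1 + R\<^sup>2)) * inverse (1 + \<omega>\<^sup>2))"
      using integrable_inverse_1_plus_square by (simp add: set_integrable_def)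
    show "AE \<omega> in lborel. norm (f \<bar>\<omega>\<bar>) \<le> norm ((2 + M * (1 + R\<^sup>2)) * inverse (1 + \<omega>\<^sup>2))"
      using bound by (auto intro!: AE_I2 order_trans[OF _ abs_ge_self])
  qed measurable
qed

lemma integrable_exp_neg_abs_powr:
  fixes a g :: real
  assumes "a > 0" "g > 0"
  shows "integrable lborel (\<lambda>\<omega>. exp (- a * \<bar>\<omega>\<bar> powr g))"
proof (rule integrable_abs_of_square_decay)
  show "continuous_on {0..} (\<lambda>x. exp (- a * x powr g))"
    using assms by (intro continuous_intros continuous_on_powr') auto
  show "((\<lambda>x. x\<^sup>2 * exp (- a * x powr g)) \<longlongrightarrow> 0) at_top"
    using assms by real_asymp
qed

lemma integrable_exp_abs_minus_abs_powr:
  fixes a c g :: real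
  assumes "a > 0" "g > 1"
  shows "integrable lborel (\<lambda>\<omega>. exp (c * \<bar>\<omega>\<bar> - a * \<bar>\<omega>\<bar> powr g))"
proof (rule integrable_abs_of_square_decay)
  show "continuous_on {0..} (\<lambda>x. exp (c * x - a * x powr g))"
    using assms by (intro continuous_intros continuous_on_powr') auto
  show "((\<lambda>x. x\<^sup>2 * exp (c * x - a * x powr g)) \<longlongrightarrow> 0) at_top"
    using assms by real_asymp
qed

section \<open>Principal powers\<close>

lemma Re_powr_of_real: "Re (z powr of_real g) = norm z powr g * cos (g * Arg z)"
  by (cases "z = 0") (simp_all add: powr_def Re_exp Arg_eq_Im_Ln exp_of_real)

lemma Re_powr_ge:
  assumes "0 \<le> Re z" "0 \<le> g" "g \<le> 2"
  shows "norm z powr g * cos (g * pi / 2) \<le> Re (z powr of_real g)"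
proof -
  have "\<bar>Arg z\<bar> \<le> pi / 2"
    using assms(1) Arg_Re_nonneg by blast
  then have "g * \<bar>Arg z\<bar> \<le> g * pi / 2"
    using assms(2) mult_left_mono by fastforce
  then have "cos (g * pi / 2) \<le> cos (g * \<bar>Arg z\<bar>)"
    using assms(2,3) by (intro cos_monotone_0_pi_le) auto
  also have "cos (g * \<bar>Arg z\<bar>) = cos (g * Arg z)"
    using assms(2) by (metis abs_mult abs_of_nonneg cos_abs_real)
  finally show ?thesis
    unfolding Re_powr_of_real by (intro mult_left_mono) auto
qed

lemma minus_ii_powr:
  "(- \<i> * of_real \<omega>) powr of_real g = of_real (\<bar>\<omega>\<bar> powr g) * exp (- \<i> * of_real (g * pi / 2 * sgn \<omega>))"
proof (cases \<omega> "0::real" rule: linorder_cases)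
  case less
  have "(- \<i> * of_real \<omega>) powr of_real g = of_real (- \<omega>) powr of_real g * \<i> powr of_real g"
    using less by (subst powr_times_real_left[symmetric]) (auto simp: mult.commute)
  also have "of_real (- \<omega>) powr of_real g = (of_real (\<bar>\<omega>\<bar> powr g) :: complex)"
    using less powr_of_real[of "- \<omega>" g] by simp
  also have "\<i> powr of_real g = exp (\<i> * of_real (g * pi / 2))"
    by (simp add: powr_def mult_ac)
  finally show ?thesis
    using less by simp
next
  case greater
  have "(- \<i> * of_real \<omega>) powr of_real g = of_real \<omega> powr of_real g * (- \<i>) powr of_real g"
    using greater by (subst powr_times_real_left[symmetric]) (auto simp: mult.commute)
  also have "of_real \<omega> powr of_real g = (of_real (\<bar>\<omega>\<bar> powr g) :: complex)"
    using greater powr_of_real[of \<omega> g] by simp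
  also have "(- \<i>) powr of_real g = exp (- \<i> * of_real (g * pi / 2))"
    by (simp add: powr_def mult_ac)
  finally show ?thesis
    using greater by simp
qed simp

lemma minus_ii_mult_powr:
  "c > 0 \<Longrightarrow> (- \<i> * of_real (c * \<omega>)) powr of_real g = of_real (c powr g) * (- \<i> * of_real \<omega>) powr of_real g"
  unfolding minus_ii_powr by (simp add: abs_mult powr_mult sgn_mult)

section \<open>Inverse Fourier transforms\<close>

lemma inv_fourier_scale:
  assumes "c > 0"
  shows "inv_fourier G t = of_real c * inv_fourier (\<lambda>v. G (c * v)) (c * t)"
proof -
  have "(\<integral>\<omega>. G \<omega> * exp (- \<i> * of_real (\<omega> * t)) \<partial>lborel)
      = c *\<^sub>R (\<integral>v. G (c * v) * exp (- \<i> * of_real (v * (c * t))) \<partial>lborel)"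
    using lborel_integral_real_affine[of c "\<lambda>\<omega>. G \<omega> * exp (- \<i> * of_real (\<omega> * t))" 0] assms
    by (simp add: mult_ac)
  then show ?thesis
    by (simp add: inv_fourier_def scaleR_conv_of_real)
qed

lemma inv_fourier_shift:
  "inv_fourier (\<lambda>\<omega>. G \<omega> * exp (\<i> * of_real (\<omega> * a))) t = inv_fourier G (t - a)"
proof -
  have "G \<omega> * exp (\<i> * of_real (\<omega> * a)) * exp (- \<i> * of_real (\<omega> * t))
      = G \<omega> * exp (- \<i> * of_real (\<omega> * (t - a)))" for \<omega>
    by (simp add: mult.assoc exp_add[symmetric] right_diff_distrib)
  then show ?thesis
    unfolding inv_fourier_def by (simp only:)
qed

lemma fourier_std_normal_density:
  "(\<integral>s. of_real (std_normal_density s) * exp (\<i> * of_real (\<theta> * s)) \<partial>lborel) = of_real (exp (- \<theta>\<^sup>2 / 2))"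
proof -
  have "(\<integral>s. of_real (std_normal_density s) * exp (\<i> * of_real (\<theta> * s)) \<partial>lborel)
      = char std_normal_distribution \<theta>"
    unfolding char_def by (subst integral_density) (auto simp: scaleR_conv_of_real)
  then show ?thesis
    by (simp add: char_std_normal_distribution)
qed

lemma gaussian_average_inv_fourier:
  fixes G :: "real \<Rightarrow> complex"
  assumes G: "integrable lborel G" and "\<sigma> > 0"
  shows "(\<integral>s. of_real (std_normal_density s) * inv_fourier G (\<sigma> * s) \<partial>lborel)
    = of_real (1 / (sqrt (2 * pi) * \<sigma>)) * (\<integral>v. G (v / \<sigma>) * of_real (std_normal_density v) \<partial>lborel)"
proof -
  let ?\<phi> = "std_normal_density"
  define f where "f s \<omega> = of_real (?\<phi> s) * (G \<omega> * exp (- \<i> * of_real (\<omega> * (\<sigma> * s))))" for s \<omega>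
  have [measurable]: "G \<in> borel_measurable lborel"
    using G by auto
  have "integrable (lborel \<Otimes>\<^sub>M lborel) (\<lambda>(s, \<omega>). f s \<omega>)"
  proof (rule lborel_pair.Fubini_integrable)
    show "(\<lambda>(s, \<omega>). f s \<omega>) \<in> borel_measurable (lborel \<Otimes>\<^sub>M lborel)"
      unfolding f_def by measurable
    have "integrable lborel (\<lambda>s. ?\<phi> s * (\<integral>\<omega>. norm (G \<omega>) \<partial>lborel))"
      by (intro integrable_mult_left) simp
    then show "integrable lborel (\<lambda>s. \<integral>\<omega>. norm (case (s, \<omega>) of (s, \<omega>) \<Rightarrow> f s \<omega>) \<partial>lborel)"
      by (simp add: f_def norm_mult)
    show "AE s in lborel. integrable lborel (\<lambda>\<omega>. case (s, \<omega>) of (s, \<omega>) \<Rightarrow> f s \<omega>)"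
      unfolding f_def using G
      by (intro AE_I2) (auto intro!: integrable_mult_right Bochner_Integration.integrable_bound[OF G] simp: norm_mult)
  qed
  then have "(\<integral>s. (\<integral>\<omega>. f s \<omega> \<partial>lborel) \<partial>lborel) = (\<integral>\<omega>. (\<integral>s. f s \<omega> \<partial>lborel) \<partial>lborel)"
    by (rule lborel_pair.Fubini_integral[symmetric])
  moreover have "(\<integral>\<omega>. f s \<omega> \<partial>lborel) = of_real (2 * pi) * (of_real (?\<phi> s) * inv_fourier G (\<sigma> * s))" for s
    by (simp add: f_def inv_fourier_def)
  moreover have "(\<integral>s. f s \<omega> \<partial>lborel) = G \<omega> * of_real (sqrt (2 * pi) * ?\<phi> (\<sigma> * \<omega>))" for \<omega>
  proof -
    have "(\<integral>s. f s \<omega> \<partial>lborel)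
        = (\<integral>s. of_real (?\<phi> s) * exp (\<i> * of_real ((- (\<sigma> * \<omega>)) * s)) \<partial>lborel) * G \<omega>"
      unfolding f_def by (simp add: algebra_simps)
    then show ?thesis
      unfolding fourier_std_normal_density by (simp add: std_normal_density_def power_mult_distrib)
  qed
  moreover have "(\<integral>\<omega>. G \<omega> * of_real (sqrt (2 * pi) * ?\<phi> (\<sigma> * \<omega>)) \<partial>lborel)
      = of_real (sqrt (2 * pi) / \<sigma>) * (\<integral>v. G (v / \<sigma>) * of_real (?\<phi> v) \<partial>lborel)"
    using lborel_integral_real_affine[of "1 / \<sigma>" "\<lambda>\<omega>. G \<omega> * of_real (sqrt (2 * pi) * ?\<phi> (\<sigma> * \<omega>))" 0] \<open>\<sigma> > 0\<close>
    by (simp add: scaleR_conv_of_real integral_mult_right_zero[symmetric] mult_ac)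
  ultimately have "of_real (2 * pi) * (\<integral>s. of_real (?\<phi> s) * inv_fourier G (\<sigma> * s) \<partial>lborel)
      = of_real (sqrt (2 * pi) / \<sigma>) * (\<integral>v. G (v / \<sigma>) * of_real (?\<phi> v) \<partial>lborel)"
    by (simp only: integral_mult_right_zero)
  moreover have "sqrt (2 * pi) / \<sigma> = 2 * pi * (1 / (sqrt (2 * pi) * \<sigma>))"
    using \<open>\<sigma> > 0\<close> by (simp add: field_simps flip: real_sqrt_mult)
  ultimately show ?thesis
    by (simp add: mult.assoc times_divide_eq_right[symmetric] del: times_divide_eq_right)
qed

text \<open>If the transform vanished, Fubini would make all Gaussian averages
  \<open>\<integral> G(v/\<sigma>) \<phi>(v) dv\<close> vanish, but they tend to \<open>G 0\<close> as \<open>\<sigma> \<rightarrow> \<infinity>\<close>.\<close>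

lemma inv_fourier_not_identically_zero:
  fixes G :: "real \<Rightarrow> complex"
  assumes G: "integrable lborel G" and "isCont G 0" "G 0 \<noteq> 0" and bounded: "\<And>\<omega>. norm (G \<omega>) \<le> B"
  shows "\<exists>w. inv_fourier G w \<noteq> 0"
proof (rule ccontr)
  let ?\<phi> = "std_normal_density"
  assume "\<not> (\<exists>w. inv_fourier G w \<noteq> 0)"
  then have "(\<integral>v. G (v / \<sigma>) * of_real (?\<phi> v) \<partial>lborel) = 0" if "\<sigma> > 0" for \<sigma>
    using gaussian_average_inv_fourier[OF G that] that by simp
  then have "(\<lambda>n. \<integral>v. G (v / Suc n) * of_real (?\<phi> v) \<partial>lborel) = (\<lambda>n. 0)"
    by simp
  moreover have "(\<lambda>n. \<integral>v. G (v / Suc n) * of_real (?\<phi> v) \<partial>lborel) \<longlonglongrightarrow> (\<integral>v. G 0 * of_real (?\<phi> v) \<partial>lborel)"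
  proof (rule integral_dominated_convergence[where w = "\<lambda>v. B * ?\<phi> v"])
    have [measurable]: "G \<in> borel_measurable lborel"
      using G by auto
    show "(\<lambda>v. G 0 * of_real (?\<phi> v)) \<in> borel_measurable lborel"
      and "\<And>n. (\<lambda>v. G (v / Suc n) * of_real (?\<phi> v)) \<in> borel_measurable lborel"
      by measurable
    show "integrable lborel (\<lambda>v. B * ?\<phi> v)"
      by simp
    show "AE v in lborel. (\<lambda>n. G (v / Suc n) * of_real (?\<phi> v)) \<longlonglongrightarrow> G 0 * of_real (?\<phi> v)"
    proof (rule AE_I2, rule tendsto_mult_right, rule isCont_tendsto_compose[OF \<open>isCont G 0\<close>])
      fix v :: real
      show "(\<lambda>n. v / real (Suc n)) \<longlonglongrightarrow> 0"
        using tendsto_divide_0[OF tendsto_const filterlim_at_top_imp_at_infinity[OF filterlim_real_sequentially]]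
        by (rule LIMSEQ_Suc)
    qed
    show "\<And>n. AE v in lborel. norm (G (v / Suc n) * of_real (?\<phi> v)) \<le> B * ?\<phi> v"
      using bounded by (auto simp: norm_mult intro!: AE_I2 mult_right_mono)
  qed
  moreover have "(\<integral>v. G 0 * of_real (?\<phi> v) \<partial>lborel) = G 0"
    by (simp add: integral_complex_of_real)
  ultimately have "(\<lambda>n. 0) \<longlonglongrightarrow> G 0"
    by simp
  with \<open>G 0 \<noteq> 0\<close> show False
    using LIMSEQ_unique[OF tendsto_const] by metis
qed

lemma exp_sums_real: "(\<lambda>k. x ^ k / fact k) sums exp (x :: real)"
  using exp_converges[of x] by (simp add: divide_inverse mult.commute)

lemma power_div_fact_le_exp:
  fixes x :: real
  assumes "x \<ge> 0"
  shows "x ^ n / fact n \<le> exp x"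
proof -
  have "x ^ n / fact n = (\<Sum>k\<in>{n}. x ^ k / fact k)"
    by simp
  also have "\<dots> \<le> exp x"
    unfolding sums_unique[OF exp_sums_real]
    using assms by (intro sum_le_suminf sums_summable[OF exp_sums_real]) auto
  finally show ?thesis .
qed

lemma sums_integral_if_norms_sum_integrable:
  fixes f :: "nat \<Rightarrow> 'a \<Rightarrow> 'b::{banach, second_countable_topology}"
  assumes integrable_f: "\<And>k. integrable M (f k)"
    and norms_sum: "\<And>x. (\<lambda>k. norm (f k x)) sums E x" and "integrable M E"
  shows "(\<lambda>k. integral\<^sup>L M (f k)) sums (\<integral>x. (\<Sum>k. f k x) \<partial>M)"
proof (rule sums_integral[OF integrable_f AE_I2[OF sums_summable[OF norms_sum]]])
  have [measurable]: "f k \<in> borel_measurable M" for k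
    using integrable_f by auto
  show "summable (\<lambda>k. \<integral>x. norm (f k x) \<partial>M)"
  proof (rule summable_suminf_not_top)
    have "(\<Sum>k. ennreal (\<integral>x. norm (f k x) \<partial>M)) = (\<Sum>k. \<integral>\<^sup>+x. norm (f k x) \<partial>M)"
      by (intro suminf_cong nn_integral_eq_integral[symmetric] integrable_norm integrable_f) auto
    also have "\<dots> = (\<integral>\<^sup>+x. (\<Sum>k. ennreal (norm (f k x))) \<partial>M)"
      by (rule nn_integral_suminf[symmetric]) measurable
    also have "\<dots> = (\<integral>\<^sup>+x. E x \<partial>M)"
      by (intro nn_integral_cong suminf_ennreal_eq[OF _ norms_sum]) simp
    also have "\<dots> = ennreal (\<integral>x. E x \<partial>M)"
      using sums_le[OF _ sums_zero norms_sum] by (intro nn_integral_eq_integral \<open>integrable M E\<close> AE_I2) auto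
    finally show "(\<Sum>k. ennreal (\<integral>x. norm (f k x) \<partial>M)) \<noteq> \<top>"
      by simp
  qed auto
qed

lemma fourier_integral_powser:
  fixes G :: "real \<Rightarrow> complex"
  assumes [measurable]: "G \<in> borel_measurable lborel"
    and moments: "\<And>c. integrable lborel (\<lambda>\<omega>. exp (c * \<bar>\<omega>\<bar>) * norm (G \<omega>))"
  shows "(\<lambda>k. (\<integral>\<omega>. G \<omega> * (- \<i> * of_real \<omega>) ^ k \<partial>lborel) / fact k * z ^ k)
    sums (\<integral>\<omega>. G \<omega> * exp (- \<i> * of_real \<omega> * z) \<partial>lborel)"
proof -
  define f where "f k \<omega> = G \<omega> * (- \<i> * of_real \<omega>) ^ k * (z ^ k / fact k)" for k \<omega>
  define E where "E \<omega> = exp (norm z * \<bar>\<omega>\<bar>) * norm (G \<omega>)" for \<omega>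
  have norm_f: "norm (f k \<omega>) = norm (G \<omega>) * ((\<bar>\<omega>\<bar> * norm z) ^ k / fact k)" for k \<omega>
    by (simp add: f_def norm_mult norm_power norm_divide power_mult_distrib)
  have norm_f_sums: "(\<lambda>k. norm (f k \<omega>)) sums E \<omega>" for \<omega>
    unfolding norm_f E_def using sums_mult[OF exp_sums_real, of "norm (G \<omega>)" "\<bar>\<omega>\<bar> * norm z"]
    by (simp add: mult_ac)
  have integrable_f: "integrable lborel (f k)" for k
  proof (rule Bochner_Integration.integrable_bound[OF moments[of "norm z"]])
    have "norm (f k \<omega>) \<le> E \<omega>" for \<omega>
      unfolding norm_f E_def
      using mult_left_mono[OF power_div_fact_le_exp[of "\<bar>\<omega>\<bar> * norm z" k], of "norm (G \<omega>)"]
      by (simp add: mult.commute)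
    then show "AE \<omega> in lborel. norm (f k \<omega>) \<le> norm (exp (norm z * \<bar>\<omega>\<bar>) * norm (G \<omega>))"
      by (auto simp: E_def)
  qed (unfold f_def, measurable)
  have "(\<lambda>k. integral\<^sup>L lborel (f k)) sums (\<integral>\<omega>. (\<Sum>k. f k \<omega>) \<partial>lborel)"
    using moments[of "norm z"]
    by (intro sums_integral_if_norms_sum_integrable[OF integrable_f norm_f_sums]) (simp add: E_def)
  moreover have "(\<Sum>k. f k \<omega>) = G \<omega> * exp (- \<i> * of_real \<omega> * z)" for \<omega>
  proof -
    have "(\<lambda>k. G \<omega> * ((- \<i> * of_real \<omega> * z) ^ k /\<^sub>R fact k)) sums (G \<omega> * exp (- \<i> * of_real \<omega> * z))"
      by (intro sums_mult exp_converges)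
    moreover have "f k \<omega> = G \<omega> * ((- \<i> * of_real \<omega> * z) ^ k /\<^sub>R fact k)" for k
      unfolding f_def mult.assoc[of "- \<i> * of_real \<omega>"] power_mult_distrib
      by (simp add: scaleR_conv_of_real divide_inverse)
    ultimately show ?thesis
      by (simp add: sums_iff)
  qed
  moreover have "integral\<^sup>L lborel (f k) = (\<integral>\<omega>. G \<omega> * (- \<i> * of_real \<omega>) ^ k \<partial>lborel) / fact k * z ^ k" for k
    unfolding f_def by simp
  ultimately show ?thesis
    by simp
qed

text \<open>The exponential moments make the Fourier integral an entire function of the
  time variable, so it vanishes identically once it vanishes on a half-line.\<close>

lemma inv_fourier_eq_0_if_vanishes_on_neg:
  fixes G :: "real \<Rightarrow> complex"
  assumes "G \<in> borel_measurable lborel"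
    and "\<And>c. integrable lborel (\<lambda>\<omega>. exp (c * \<bar>\<omega>\<bar>) * norm (G \<omega>))"
    and vanishes: "\<And>w. w < 0 \<Longrightarrow> inv_fourier G w = 0"
  shows "inv_fourier G w = 0"
proof -
  define c where "c k = (\<integral>\<omega>. G \<omega> * (- \<i> * of_real \<omega>) ^ k \<partial>lborel) / fact k" for k
  define F where "F z = (\<integral>\<omega>. G \<omega> * exp (- \<i> * of_real \<omega> * z) \<partial>lborel)" for z
  have sums: "(\<lambda>k. c k * z ^ k) sums F z" for z
    unfolding c_def F_def by (rule fourier_integral_powser[OF assms(1,2)])
  have "F = (\<lambda>z. \<Sum>k. c k * z ^ k)"
    using sums by (simp add: fun_eq_iff sums_iff)
  then have "(F has_field_derivative (\<Sum>k. diffs c k * z ^ k)) (at z)" for z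
    using termdiffs_strong_converges_everywhere[OF sums_summable[OF sums]] by simp
  then have "F holomorphic_on UNIV"
    by (auto simp: holomorphic_on_open)
  have F_of_real: "F (of_real v) = of_real (2 * pi) * inv_fourier G v" for v
    by (simp add: F_def inv_fourier_def mult.assoc)
  have "(-1) islimpt (of_real ` {..<0} :: complex set)"
  proof (rule islimpt_approachable[THEN iffD2], intro allI impI)
    fix e :: real assume "e > 0"
    define d where "d = min (e / 2) (1 / 2)"
    have "0 < d" "d < e" "-1 + d < 0"
      using \<open>e > 0\<close> by (auto simp: d_def)
    then have mem: "of_real (-1 + d) \<in> (of_real ` {..<0} :: complex set)"
      by (intro imageI) simp
    moreover have "dist (of_real (-1 + d)) (-1 :: complex) = d"
      using \<open>0 < d\<close> by (simp add: dist_norm)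
    ultimately show "\<exists>z \<in> (of_real ` {..<0} :: complex set). z \<noteq> -1 \<and> dist z (-1) < e"
      using \<open>0 < d\<close> \<open>d < e\<close> by (intro bexI[OF _ mem]) auto
  qed
  moreover have "F z = 0" if "z \<in> of_real ` {..<0}" for z
    using that vanishes by (auto simp: F_of_real)
  ultimately have "F (of_real w) = 0"
    by (rule analytic_continuation[OF \<open>F holomorphic_on UNIV\<close> open_UNIV connected_UNIV subset_UNIV UNIV_I _ _ UNIV_I])
  then show ?thesis
    by (simp add: F_of_real)
qed

lemma integral_real_interval_eq_rectangle_sides:
  fixes f :: "complex \<Rightarrow> complex"
  assumes cont: "continuous_on {z. 0 \<le> Im z} f" and holo: "f holomorphic_on {z. 0 < Im z}"
    and "R > 0"
  shows "integral {-R..R} (\<lambda>x. f (of_real x))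
    = - (contour_integral (linepath (Complex R 0) (Complex R R)) f
       + contour_integral (linepath (Complex R R) (Complex (-R) R)) f
       + contour_integral (linepath (Complex (-R) R) (Complex (-R) 0)) f)"
proof -
  define a1 a2 a3 a4 where "a1 = Complex (-R) 0" and "a2 = Complex R 0"
    and "a3 = Complex R R" and "a4 = Complex (-R) R"
  define S where "S = cbox a1 a3"
  define I where "I x y = contour_integral (linepath x y) f" for x y
  have "S \<subseteq> {z. 0 \<le> Im z}"
    by (auto simp: S_def in_cbox_complex_iff a1_def a3_def)
  then have "continuous_on S f"
    using cont continuous_on_subset by blast
  have "convex S"
    by (simp add: S_def)
  have corners: "a1 \<in> S" "a2 \<in> S" "a3 \<in> S" "a4 \<in> S"
    using \<open>R > 0\<close> by (auto simp: S_def in_cbox_complex_iff a1_def a2_def a3_def a4_def)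
  have side: "(f has_contour_integral I x y) (linepath x y)" if "x \<in> S" "y \<in> S" for x y
    unfolding I_def using closed_segment_subset[OF that \<open>convex S\<close>]
    by (intro has_contour_integral_integral contour_integrable_continuous_linepath
        continuous_on_subset[OF \<open>continuous_on S f\<close>])
  have "(f has_contour_integral 0) (rectpath a1 a3)"
  proof (rule Cauchy_theorem_convex[OF \<open>continuous_on S f\<close> \<open>convex S\<close> finite.emptyI])
    fix z assume "z \<in> interior S - {}"
    then have "Im z > 0"
      by (auto simp: S_def interior_cbox in_box_complex_iff a1_def a3_def)
    then show "f field_differentiable at z"
      using holo open_halfspace_Im_gt by (auto intro: holomorphic_on_imp_differentiable_at)
  next
    show "path_image (rectpath a1 a3) \<subseteq> S"
      unfolding S_def using \<open>R > 0\<close>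
      by (intro path_image_rectpath_subset_cbox) (auto simp: a1_def a3_def)
  qed auto
  moreover have "rectpath a1 a3 = linepath a1 a2 +++ linepath a2 a3 +++ linepath a3 a4 +++ linepath a4 a1"
    by (simp add: rectpath_def Let_def a1_def a2_def a3_def a4_def complex_eq_iff)
  moreover have "(f has_contour_integral (I a1 a2 + (I a2 a3 + (I a3 a4 + I a4 a1))))
      (linepath a1 a2 +++ linepath a2 a3 +++ linepath a3 a4 +++ linepath a4 a1)"
    by (intro has_contour_integral_join side corners valid_path_join valid_path_linepath) auto
  ultimately have "I a1 a2 + (I a2 a3 + (I a3 a4 + I a4 a1)) = 0"
    using has_contour_integral_unique by auto
  moreover have "I a1 a2 = integral {Re a1..Re a2} (\<lambda>x. f (of_real x))"
    unfolding I_def using \<open>R > 0\<close>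
    by (intro contour_integral_linepath_Reals_eq) (auto simp: a1_def a2_def complex_is_Real_iff)
  ultimately show ?thesis
    by (simp add: I_def a1_def a2_def a3_def a4_def add_eq_0_iff add.assoc)
qed

text \<open>The three sides of the rectangle off the real axis have total length \<open>4R\<close> and lie
  outside the open disc of radius \<open>R\<close>.\<close>

lemma norm_integral_real_interval_le_upper_half_plane:
  fixes f :: "complex \<Rightarrow> complex" and B :: "real \<Rightarrow> real"
  assumes cont: "continuous_on {z. 0 \<le> Im z} f" and holo: "f holomorphic_on {z. 0 < Im z}"
    and bound: "\<And>z r. 0 \<le> Im z \<Longrightarrow> 0 \<le> r \<Longrightarrow> r \<le> norm z \<Longrightarrow> norm (f z) \<le> B r"
    and "R > 0"
  shows "norm (integral {-R..R} (\<lambda>x. f (of_real x))) \<le> 4 * R * B R"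
proof -
  define I where "I x y = contour_integral (linepath x y) f" for x y
  have side: "norm (I x y) \<le> B R * norm (y - x)"
    if "0 \<le> Im x" "0 \<le> Im y" and far: "\<And>z. z \<in> closed_segment x y \<Longrightarrow> R \<le> norm z" for x y
  proof -
    have upper: "closed_segment x y \<subseteq> {z. 0 \<le> Im z}"
      using that(1,2) by (intro closed_segment_subset) (auto simp: convex_halfspace_Im_ge)
    show ?thesis
      unfolding I_def
    proof (rule contour_integral_bound_linepath)
      show "f contour_integrable_on linepath x y"
        using upper by (intro contour_integrable_continuous_linepath continuous_on_subset[OF cont])
      show "0 \<le> B R"
        using bound[of "of_real R" R] \<open>R > 0\<close> by (simp add: order_trans[OF norm_ge_zero])
      show "norm (f z) \<le> B R" if "z \<in> closed_segment x y" for z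
        using that upper \<open>R > 0\<close> by (intro bound far) auto
    qed
  qed
  have far_Re: "R \<le> norm z" if "\<bar>Re z\<bar> = R" for z
    using abs_Re_le_cmod[of z] that by simp
  have far_Im: "R \<le> norm z" if "Im z = R" for z
    using abs_Im_le_cmod[of z] that \<open>R > 0\<close> by simp
  have "norm (I (Complex R 0) (Complex R R)) \<le> B R * norm (Complex R R - Complex R 0)"
    using \<open>R > 0\<close> by (intro side far_Re) (auto simp: closed_segment_same_Re)
  moreover have "norm (I (Complex R R) (Complex (-R) R)) \<le> B R * norm (Complex (-R) R - Complex R R)"
    using \<open>R > 0\<close> by (intro side far_Im) (auto simp: closed_segment_same_Im)
  moreover have "norm (I (Complex (-R) R) (Complex (-R) 0)) \<le> B R * norm (Complex (-R) 0 - Complex (-R) R)"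
    using \<open>R > 0\<close> by (intro side far_Re) (auto simp: closed_segment_same_Re)
  moreover have "Complex (-R) R - Complex R R = of_real (- 2 * R)"
    by (simp add: complex_eq_iff)
  moreover have "norm (Complex R R - Complex R 0) = R" "norm (Complex (-R) 0 - Complex (-R) R) = R"
    using \<open>R > 0\<close> by (simp_all add: complex_diff cmod_def)
  ultimately have "norm (I (Complex R 0) (Complex R R)) + norm (I (Complex R R) (Complex (-R) R))
      + norm (I (Complex (-R) R) (Complex (-R) 0)) \<le> 4 * R * B R"
    using \<open>R > 0\<close> by (simp add: algebra_simps)
  moreover have "norm (integral {-R..R} (\<lambda>x. f (of_real x)))
      \<le> norm (I (Complex R 0) (Complex R R)) + norm (I (Complex R R) (Complex (-R) R))
        + norm (I (Complex (-R) R) (Complex (-R) 0))"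
    unfolding integral_real_interval_eq_rectangle_sides[OF cont holo \<open>R > 0\<close>] norm_minus_cancel I_def
    by (intro norm_triangle_le add_right_mono norm_triangle_ineq)
  ultimately show ?thesis
    by linarith
qed

lemma integral_real_line_eq_0_upper_half_plane:
  fixes f :: "complex \<Rightarrow> complex" and B :: "real \<Rightarrow> real"
  assumes cont: "continuous_on {z. 0 \<le> Im z} f" and holo: "f holomorphic_on {z. 0 < Im z}"
    and integrable: "integrable lborel (\<lambda>x. f (of_real x))"
    and bound: "\<And>z r. 0 \<le> Im z \<Longrightarrow> 0 \<le> r \<Longrightarrow> r \<le> norm z \<Longrightarrow> norm (f z) \<le> B r"
    and decay: "((\<lambda>r. r * B r) \<longlongrightarrow> 0) at_top"
  shows "(\<integral>x. f (of_real x) \<partial>lborel) = 0"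
proof -
  let ?F = "\<lambda>x. f (of_real x)"
  let ?I = "\<lambda>R. \<integral>x. indicator {-R..R} x *\<^sub>R ?F x \<partial>lborel"
  have [measurable]: "?F \<in> borel_measurable lborel"
    using integrable by auto
  have "(?I \<longlongrightarrow> integral\<^sup>L lborel ?F) at_top"
  proof (rule integral_dominated_convergence_at_top[where w = "\<lambda>x. norm (?F x)"])
    show "AE x in lborel. ((\<lambda>R. indicator {-R..R} x *\<^sub>R ?F x) \<longlongrightarrow> ?F x) at_top"
    proof (rule AE_I2, rule tendsto_eventually)
      fix x :: real
      show "\<forall>\<^sub>F R in at_top. indicator {-R..R} x *\<^sub>R ?F x = ?F x"
        using eventually_ge_at_top[of "\<bar>x\<bar>"] by eventually_elim (auto simp: indicator_def)
    qed
  qed (use integrable in \<open>auto split: split_indicator\<close>)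
  moreover have "(?I \<longlongrightarrow> 0) at_top"
  proof (rule Lim_null_comparison)
    have interval_bound: "norm (?I R) \<le> 4 * (R * B R)" if "R > 0" for R
    proof -
      have "set_integrable lborel {-R..R} ?F"
        unfolding set_integrable_def by (rule integrable_mult_indicator) (auto intro: integrable)
      then have "?I R = integral {-R..R} ?F"
        unfolding set_lebesgue_integral_def[symmetric] by (rule set_borel_integral_eq_integral)
      then show ?thesis
        using norm_integral_real_interval_le_upper_half_plane[where B = B, OF cont holo bound that]
        by (simp add: mult.assoc)
    qed
    show "\<forall>\<^sub>F R in at_top. norm (?I R) \<le> 4 * (R * B R)"
      using eventually_gt_at_top[of 0] by eventually_elim (rule interval_bound)
    show "((\<lambda>R. 4 * (R * B R)) \<longlongrightarrow> 0) at_top"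
      using tendsto_mult_right_zero[OF decay] by simp
  qed
  ultimately show ?thesis
    by (rule tendsto_unique[OF trivial_limit_at_top_linorder])
qed

section \<open>The stable kernel\<close>

text \<open>For \<open>b = alpha_tilde0 a0 g\<close> this is
  \<open>exp (- a0 \<bar>\<omega>\<bar>\<^sup>g (1 - \<i> tan (\<pi>g/2) sgn \<omega>))\<close>, the characteristic function of
  a totally skewed \<open>g\<close>-stable law, whose density is its inverse Fourier transform.\<close>

definition stable_cf :: "real \<Rightarrow> real \<Rightarrow> real \<Rightarrow> complex" where
  "stable_cf b g \<omega> = exp (- (of_real b * (- \<i> * of_real \<omega>) powr of_real g))"

lemma stable_cf_0 [simp]: "stable_cf b g 0 = 1"
  by (simp add: stable_cf_def)

lemma norm_stable_cf: "norm (stable_cf b g \<omega>) = exp (- b * cos (g * pi / 2) * \<bar>\<omega>\<bar> powr g)"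
proof -
  have "cos (g * pi / 2 * sgn \<omega>) = cos (g * pi / 2) \<or> \<omega> = 0"
    by (cases "\<omega> > 0"; cases "\<omega> < 0") auto
  then show ?thesis
    unfolding stable_cf_def minus_ii_powr by (auto simp: Re_exp)
qed

lemma measurable_stable_cf [measurable]: "stable_cf b g \<in> borel_measurable borel"
  unfolding stable_cf_def minus_ii_powr by measurable

lemma isCont_stable_cf_0:
  assumes "g > 0"
  shows "isCont (stable_cf b g) 0"
proof -
  have "((\<lambda>\<omega>. \<bar>\<omega>\<bar> powr g) \<longlongrightarrow> 0) (at (0::real))"
    using assms by (intro tendsto_zero_powrI tendsto_eq_intros) auto
  then have "((\<lambda>\<omega>. (- \<i> * of_real \<omega>) powr of_real g) \<longlongrightarrow> 0) (at 0)"
    by (subst tendsto_norm_zero_iff[symmetric]) (simp only: minus_ii_powr, simp add: norm_mult)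
  then have "isCont (\<lambda>\<omega>. (- \<i> * of_real \<omega>) powr of_real g) 0"
    by (simp add: isCont_def)
  then show ?thesis
    unfolding stable_cf_def by (intro continuous_exp continuous_minus continuous_mult continuous_const)
qed

lemma cos_mult_pi_half_neq_0:
  assumes "g > 0" "g \<notin> \<nat>"
  shows "cos (g * pi / 2) \<noteq> 0"
proof
  assume "cos (g * pi / 2) = 0"
  then obtain i :: int where "g * pi / 2 = of_int i * (pi / 2)"
    by (auto simp: cos_zero_iff_int)
  then have "g = of_int i"
    by (simp add: field_simps)
  with assms show False
    by (metis of_int_0_less_iff of_nat_in_Nats of_nat_nat less_imp_le)
qed

lemma alpha_tilde0_mult_cos:
  "cos (g * pi / 2) \<noteq> 0 \<Longrightarrow> alpha_tilde0 a0 g * cos (g * pi / 2) = a0"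
  by (simp add: alpha_tilde0_def mult.commute)

lemma norm_stable_cf_alpha_tilde0:
  "cos (g * pi / 2) \<noteq> 0 \<Longrightarrow> norm (stable_cf (alpha_tilde0 a0 g) g \<omega>) = exp (- a0 * \<bar>\<omega>\<bar> powr g)"
  by (simp add: norm_stable_cf alpha_tilde0_mult_cos)

lemma integrable_stable_cf:
  assumes "a0 > 0" "g > 0" "cos (g * pi / 2) \<noteq> 0"
  shows "integrable lborel (stable_cf (alpha_tilde0 a0 g) g)"
proof (rule Bochner_Integration.integrable_bound[OF integrable_exp_neg_abs_powr[OF assms(1,2)]])
  show "AE \<omega> in lborel. norm (stable_cf (alpha_tilde0 a0 g) g \<omega>) \<le> norm (exp (- a0 * \<bar>\<omega>\<bar> powr g))"
    using assms(3) by (simp add: norm_stable_cf_alpha_tilde0)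
qed measurable

definition stable_kernel :: "real \<Rightarrow> real \<Rightarrow> real \<Rightarrow> complex" where
  "stable_kernel a0 g = inv_fourier (stable_cf (alpha_tilde0 a0 g) g)"

lemma K_pl_eq_stable_kernel:
  fixes x :: "'a::euclidean_space"
  assumes "x \<noteq> 0" "g > 0"
  defines "l \<equiv> norm x powr (-1/g)"
  shows "K_pl a0 a1 g x t
    = of_real (l / sqrt (2 * pi)) * stable_kernel a0 g (l * (t - a1 * norm x))"
proof -
  define r where "r = norm x"
  define b where "b = alpha_tilde0 a0 g"
  have "r > 0" "l > 0"
    using assms by (simp_all add: r_def l_def)
  have "l powr g * r = r powr (-1) * r"
    using assms(2) by (simp add: l_def r_def powr_powr)
  then have lr: "l powr g * r = 1"
    using \<open>r > 0\<close> by (simp add: powr_minus)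
  have "alpha_pl_plus a0 a1 g (l * v) * of_real r
      = of_real b * (- \<i> * of_real v) powr of_real g * of_real (l powr g * r) - \<i> * of_real (v * (l * a1 * r))" for v
    by (simp only: alpha_pl_plus_def minus_ii_mult_powr[OF \<open>l > 0\<close>])
      (simp add: field_simps b_def)
  then have scaled: "exp (- alpha_pl_plus a0 a1 g (l * v) * of_real r)
      = stable_cf b g v * exp (\<i> * of_real (v * (l * a1 * r)))" for v
    by (simp add: lr stable_cf_def flip: exp_add)
  have "K_pl a0 a1 g x t = of_real (1 / sqrt (2 * pi)) * inv_fourier (\<lambda>\<omega>. exp (- alpha_pl_plus a0 a1 g \<omega> * of_real r)) t"
    by (simp add: K_pl_def r_def)
  also have "inv_fourier (\<lambda>\<omega>. exp (- alpha_pl_plus a0 a1 g \<omega> * of_real r)) t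
      = of_real l * inv_fourier (\<lambda>v. stable_cf b g v * exp (\<i> * of_real (v * (l * a1 * r)))) (l * t)"
    unfolding scaled[symmetric] by (rule inv_fourier_scale[OF \<open>l > 0\<close>])
  also have "\<dots> = of_real l * inv_fourier (stable_cf b g) (l * (t - a1 * r))"
    by (simp only: inv_fourier_shift right_diff_distrib mult.assoc)
  finally show ?thesis
    by (simp add: stable_kernel_def b_def r_def)
qed

lemma exists_pos_add_mult_neg:
  fixes w a :: real
  assumes "w < 0 \<or> a < 0"
  shows "\<exists>q > 0. w + a * q < 0"
proof (cases "a < 0")
  case True
  then have "w + a * ((\<bar>w\<bar> + 1) / - a) = w - \<bar>w\<bar> - 1"
    by (simp add: field_simps)
  then show ?thesis
    using True by (intro exI[of _ "(\<bar>w\<bar> + 1) / - a"]) (auto simp: divide_pos_neg)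
next
  case False
  with assms have "w < 0" "a \<ge> 0"
    by auto
  then have "a * (- w / (a + 1)) < - w"
    by (simp add: field_simps)
  then show ?thesis
    using \<open>w < 0\<close> \<open>a \<ge> 0\<close> by (intro exI[of _ "- w / (a + 1)"]) (auto simp: divide_neg_pos)
qed

text \<open>For \<open>g \<noteq> 1\<close>, \<open>(r, t) \<mapsto> (r\<^sup>-\<^sup>1\<^sup>/\<^sup>g t, r\<^sup>1\<^sup>-\<^sup>1\<^sup>/\<^sup>g)\<close> maps \<open>(0,\<infinity>) \<times> (-\<infinity>,0)\<close>
  onto \<open>(-\<infinity>,0) \<times> (0,\<infinity>)\<close>.\<close>

lemma scaled_time_range:
  fixes g a :: real
  assumes "g > 0" "g \<noteq> 1"
  shows "{r powr (-1/g) * (t - a * r) | r t. r > 0 \<and> t < 0} = {w. w < 0 \<or> a < 0}"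
proof (intro equalityI subsetI)
  fix w assume "w \<in> {r powr (-1/g) * (t - a * r) | r t. r > 0 \<and> t < 0}"
  then obtain r t where "r > 0" "t < 0" and w: "w = r powr (-1/g) * (t - a * r)"
    by blast
  then have "t - a * r < 0" if "a \<ge> 0"
    using that by (smt (verit) mult_nonneg_nonneg)
  then show "w \<in> {w. w < 0 \<or> a < 0}"
    using \<open>r > 0\<close> by (auto simp: w mult_pos_neg)
next
  fix w :: real assume "w \<in> {w. w < 0 \<or> a < 0}"
  then have "\<exists>q > 0. w + a * q < 0"
    by (intro exists_pos_add_mult_neg) simp
  then obtain q where "q > 0" and neg: "w + a * q < 0"
    by blast
  define r where "r = q powr (g / (g - 1))"
  have "r > 0"
    using \<open>q > 0\<close> by (simp add: r_def)
  have "r powr (-1/g) * r = r powr (-1/g + 1)"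
    using \<open>r > 0\<close> powr_add[of r "-1/g" 1] by simp
  also have "-1/g + 1 = (g - 1) / g"
    using assms by (simp add: field_simps)
  also have "r powr ((g - 1) / g) = q"
    using \<open>q > 0\<close> assms by (simp add: r_def powr_powr)
  finally have "r powr (-1/g) * r = q" .
  moreover have "r powr (-1/g) * r powr (1/g) = 1"
    using \<open>r > 0\<close> by (simp flip: powr_add)
  ultimately have "w = r powr (-1/g) * (r powr (1/g) * (w + a * q) - a * r)"
    by (simp add: algebra_simps)
  moreover have "r powr (1/g) * (w + a * q) < 0"
    using \<open>r > 0\<close> neg by (simp add: mult_pos_neg)
  ultimately show "w \<in> {r powr (-1/g) * (t - a * r) | r t. r > 0 \<and> t < 0}"
    using \<open>r > 0\<close> by blast
qed

lemma causal_K_pl_iff: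
  assumes "g > 0" "g \<noteq> 1"
  shows "causal (K_pl a0 a1 g :: 'a::euclidean_space \<Rightarrow> real \<Rightarrow> complex)
    \<longleftrightarrow> (\<forall>w. w < 0 \<or> a1 < 0 \<longrightarrow> stable_kernel a0 g w = 0)"
proof -
  let ?S = "stable_kernel a0 g"
  have K_zero_iff: "K_pl a0 a1 g x t = 0 \<longleftrightarrow> ?S (norm x powr (-1/g) * (t - a1 * norm x)) = 0"
    if "x \<noteq> 0" for x :: 'a and t
    using K_pl_eq_stable_kernel[OF that assms(1)] that by simp
  have "causal (K_pl a0 a1 g :: 'a \<Rightarrow> real \<Rightarrow> complex)
      \<longleftrightarrow> (\<forall>r>0. \<forall>t<0. ?S (r powr (-1/g) * (t - a1 * r)) = 0)"
  proof
    assume causal: "causal (K_pl a0 a1 g :: 'a \<Rightarrow> real \<Rightarrow> complex)"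
    show "\<forall>r>0. \<forall>t<0. ?S (r powr (-1/g) * (t - a1 * r)) = 0"
    proof (intro allI impI)
      fix r t :: real assume "r > 0" "t < 0"
      obtain x :: 'a where "norm x = r"
        using vector_choose_size \<open>r > 0\<close> less_imp_le by blast
      with \<open>r > 0\<close> have "x \<noteq> 0"
        by auto
      with causal \<open>t < 0\<close> \<open>norm x = r\<close> show "?S (r powr (-1/g) * (t - a1 * r)) = 0"
        unfolding causal_def using K_zero_iff by blast
    qed
  qed (auto simp: causal_def K_zero_iff)
  also have "\<dots> \<longleftrightarrow> (\<forall>w \<in> {r powr (-1/g) * (t - a1 * r) | r t. r > 0 \<and> t < 0}. ?S w = 0)"
    by blast
  finally show ?thesis
    unfolding scaled_time_range[OF assms] by blast
qed

lemma stable_kernel_not_identically_zero: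
  assumes "a0 > 0" "g > 0" "cos (g * pi / 2) \<noteq> 0"
  shows "\<exists>w. stable_kernel a0 g w \<noteq> 0"
  unfolding stable_kernel_def
proof (rule inv_fourier_not_identically_zero)
  show "norm (stable_cf (alpha_tilde0 a0 g) g \<omega>) \<le> 1" for \<omega>
    using assms by (simp add: norm_stable_cf_alpha_tilde0)
qed (use assms integrable_stable_cf isCont_stable_cf_0 in auto)

lemma stable_kernel_eq_0_if_vanishes_on_neg:
  assumes "a0 > 0" "g > 1" "cos (g * pi / 2) \<noteq> 0"
    and "\<And>w. w < 0 \<Longrightarrow> stable_kernel a0 g w = 0"
  shows "stable_kernel a0 g w = 0"
  unfolding stable_kernel_def
proof (rule inv_fourier_eq_0_if_vanishes_on_neg)
  show "integrable lborel (\<lambda>\<omega>. exp (c * \<bar>\<omega>\<bar>) * norm (stable_cf (alpha_tilde0 a0 g) g \<omega>))" for c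
    using integrable_exp_abs_minus_abs_powr[OF assms(1,2), of c] assms(3)
    by (simp add: norm_stable_cf_alpha_tilde0 exp_diff exp_minus field_simps)
qed (use assms in \<open>auto simp: stable_kernel_def\<close>)

lemma cos_mult_pi_half_gt_0:
  assumes "0 < g" "g < 1"
  shows "cos (g * pi / 2) > 0"
proof -
  have "0 < g * pi" "g * pi < pi"
    using assms by auto
  then show ?thesis
    using pi_gt_zero by (intro cos_gt_zero_pi) linarith+
qed

lemma norm_stable_cf_upper_half_plane_le:
  assumes "a0 > 0" "0 < g" "g < 1" "0 \<le> Im z"
  shows "norm (exp (- (of_real (alpha_tilde0 a0 g) * (- \<i> * z) powr of_real g))) \<le> exp (- a0 * norm z powr g)"
proof -
  define b where "b = alpha_tilde0 a0 g"
  have "cos (g * pi / 2) > 0"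
    using cos_mult_pi_half_gt_0 assms(2,3) .
  then have "b * cos (g * pi / 2) = a0" "b > 0"
    using \<open>a0 > 0\<close> by (simp_all add: b_def alpha_tilde0_mult_cos alpha_tilde0_def mult.commute)
  have "norm z powr g * cos (g * pi / 2) \<le> Re ((- \<i> * z) powr of_real g)"
    using Re_powr_ge[of "- \<i> * z" g] assms(2,3,4) by (simp add: norm_mult)
  then have "a0 * norm z powr g \<le> b * Re ((- \<i> * z) powr of_real g)"
    using \<open>b * cos (g * pi / 2) = a0\<close> \<open>b > 0\<close> mult_left_mono[of _ _ b] by (fastforce simp: mult_ac)
  then show ?thesis
    by (simp add: b_def)
qed

lemma stable_kernel_neg_eq_0:
  assumes "a0 > 0" "0 < g" "g < 1" "w < 0"
  shows "stable_kernel a0 g w = 0"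
proof -
  define E where "E z = exp (- (of_real (alpha_tilde0 a0 g) * (- \<i> * z) powr of_real g))" for z
  define f where "f z = E z * exp (- \<i> * z * of_real w)" for z
  have f_real: "f (of_real \<omega>) = stable_cf (alpha_tilde0 a0 g) g \<omega> * exp (- \<i> * of_real (\<omega> * w))" for \<omega>
    by (simp add: f_def E_def stable_cf_def mult.assoc)
  have "(\<integral>x. f (of_real x) \<partial>lborel) = 0"
  proof (rule integral_real_line_eq_0_upper_half_plane)
    show "continuous_on {z. 0 \<le> Im z} f"
      unfolding f_def E_def using \<open>g > 0\<close> by (intro continuous_intros) auto
    show "f holomorphic_on {z. 0 < Im z}"
      unfolding f_def E_def by (intro holomorphic_intros) (auto simp: complex_nonpos_Reals_iff)
    have "cos (g * pi / 2) \<noteq> 0"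
      using cos_mult_pi_half_gt_0 assms(2,3) by fastforce
    then show "integrable lborel (\<lambda>x. f (of_real x))"
    proof (rule Bochner_Integration.integrable_bound[OF integrable_stable_cf[OF \<open>a0 > 0\<close> \<open>g > 0\<close>]])
      show "AE x in lborel. norm (f (of_real x)) \<le> norm (stable_cf (alpha_tilde0 a0 g) g x)"
        by (simp add: f_real norm_mult)
    qed (simp add: f_real)
    show "norm (f z) \<le> exp (- a0 * r powr g)" if "0 \<le> Im z" "0 \<le> r" "r \<le> norm z" for z r
    proof -
      have "norm (f z) = norm (E z) * exp (Im z * w)"
        by (simp add: f_def norm_mult)
      also have "\<dots> \<le> norm (E z)"
        using that(1) \<open>w < 0\<close> by (simp add: mult_nonneg_nonpos mult_left_le)
      also have "\<dots> \<le> exp (- a0 * norm z powr g)"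
        unfolding E_def using assms(1-3) that(1) by (rule norm_stable_cf_upper_half_plane_le)
      also have "\<dots> \<le> exp (- a0 * r powr g)"
        using that \<open>a0 > 0\<close> \<open>g > 0\<close> by (simp add: powr_mono2)
      finally show ?thesis .
    qed
    show "((\<lambda>r. r * exp (- a0 * r powr g)) \<longlongrightarrow> 0) at_top"
      using \<open>a0 > 0\<close> \<open>g > 0\<close> by real_asymp
  qed
  then show ?thesis
    by (simp add: stable_kernel_def inv_fourier_def f_real)
qed

theorem theorem3:
  fixes a0 a1 \<gamma> :: real
  assumes "a0 > 0" and "\<gamma> > 0" and "\<gamma> \<notin> \<nat>"
  shows "(\<gamma> > 1 \<longrightarrow> \<not> causal (K_pl a0 a1 \<gamma> :: 'a::euclidean_space \<Rightarrow> real \<Rightarrow> complex))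
       \<and> (\<gamma> < 1 \<longrightarrow> (causal (K_pl a0 a1 \<gamma> :: 'a \<Rightarrow> real \<Rightarrow> complex) \<longleftrightarrow> a1 \<ge> 0))"
proof (intro conjI impI)
  let ?S = "stable_kernel a0 \<gamma>"
  have "cos (\<gamma> * pi / 2) \<noteq> 0" "\<gamma> \<noteq> 1"
    using assms cos_mult_pi_half_neq_0 by auto
  then obtain w0 where "?S w0 \<noteq> 0"
    using stable_kernel_not_identically_zero assms(1,2) by blast
  note causal_iff = causal_K_pl_iff[OF \<open>\<gamma> > 0\<close> \<open>\<gamma> \<noteq> 1\<close>, of a0 a1]
  show "\<not> causal (K_pl a0 a1 \<gamma> :: 'a \<Rightarrow> real \<Rightarrow> complex)" if "\<gamma> > 1"
    using stable_kernel_eq_0_if_vanishes_on_neg[OF \<open>a0 > 0\<close> that \<open>cos (\<gamma> * pi / 2) \<noteq> 0\<close>] \<open>?S w0 \<noteq> 0\<close>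
    unfolding causal_iff by blast
  show "causal (K_pl a0 a1 \<gamma> :: 'a \<Rightarrow> real \<Rightarrow> complex) \<longleftrightarrow> a1 \<ge> 0" if "\<gamma> < 1"
    using stable_kernel_neg_eq_0[OF \<open>a0 > 0\<close> \<open>\<gamma> > 0\<close> that] \<open>?S w0 \<noteq> 0\<close>
    unfolding causal_iff by (meson not_less)
qed

end
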